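(* Let $\gamma\ge6/5$ and consider the SIEMS4 coefficients $(a_0,\dots,a_3)=\big(\gamma^3+\tfrac{3\gamma^2}{2}-\tfrac{\gamma}{2}+\tfrac1{12},\ -3\gamma^3-\tfrac{3\gamma^2}{2}+3\gamma-\tfrac5{12},\ 3\gamma^3-\tfrac{3\gamma^2}{2}-\tfrac{3\gamma}{2}+\tfrac{13}{12},\ -\gamma^3+\tfrac{3\gamma^2}{2}-\gamma+\tfrac14\big)$, $(b_0,\dots,b_4)=(\gamma^3,\ 3\gamma^2-3\gamma^3,\ 3\gamma^3-6\gamma^2+3\gamma,\ -\gamma^3+3\gamma^2-3\gamma+1,\ 0)$, $(c_0,\dots,c_3)=(\gamma^3+3\gamma^2,\ -3\gamma^3-6\gamma^2+3\gamma,\ 3\gamma^3+3\gamma^2-3\gamma+1,\ -\gamma^3)$. Then $$\sigma_{\mathrm{F}}=1,\quad\sigma_{\mathrm{E}}=\frac{3(8\gamma^3+12\gamma^2-6\gamma+1)}{4(6\gamma^3-3\gamma+1)},\quad\lambda_{\mathrm{I}}=\frac{3(2\gamma-1)^3}{4(6\gamma^3-3\gamma+1)},$$ so that $\mathfrak{I}_{\mathrm{IE}}=\dfrac{(2\gamma-1)^3}{8\gamma^3+12\gamma^2-6\gamma+1}$.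
   Context: For coefficient vectors $(a_j)_{j=0}^{\mathrm{k}-1}$, $(b_j)_{j=0}^{\mathrm{k}}$, $(c_j)_{j=0}^{\mathrm{k}-1}$ define $a(\theta)=\sum_j a_je^{\imath j\theta}$, $b(\theta)=\sum_j b_je^{\imath j\theta}$, $c(\theta)=\sum_jc_je^{\imath j\theta}$ and $\sigma_{\mathrm{F}}=\max_{\theta\in[0,2\pi)}|1/a(\theta)|$, $\sigma_{\mathrm{E}}=\max_{\theta\in[0,2\pi)}|c(\theta)/a(\theta)|$, $\lambda_{\mathrm{I}}=\min_{\theta\in[0,2\pi)}\Re[b(\theta)/a(\theta)]$, $\mathfrak{I}_{\mathrm{IE}}=\lambda_{\mathrm{I}}/\sigma_{\mathrm{E}}$. Here $\mathrm{k}=4$. *)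

theory Defs
  imports "HOL-Analysis.Analysis"
begin

definition symb :: "(nat \<Rightarrow> real) \<Rightarrow> nat \<Rightarrow> real \<Rightarrow> complex" where
  "symb v n \<theta> = (\<Sum>j<n. complex_of_real (v j) * exp (\<i> * of_nat j * complex_of_real \<theta>))"

text \<open>k = 4: a and c have k = 4 coefficients, b has k+1 = 5.\<close>
definition sigmaF :: "(nat \<Rightarrow> real) \<Rightarrow> real" where
  "sigmaF a = (SUP \<theta>\<in>{0..<2*pi}. cmod (1 / symb a 4 \<theta>))"

definition sigmaE :: "(nat \<Rightarrow> real) \<Rightarrow> (nat \<Rightarrow> real) \<Rightarrow> real" where
  "sigmaE a c = (SUP \<theta>\<in>{0..<2*pi}. cmod (symb c 4 \<theta> / symb a 4 \<theta>))"

definition lambdaI :: "(nat \<Rightarrow> real) \<Rightarrow> (nat \<Rightarrow> real) \<Rightarrow> real" where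
  "lambdaI a b = (INF \<theta>\<in>{0..<2*pi}. Re (symb b 5 \<theta> / symb a 4 \<theta>))"

definition IIE :: "(nat \<Rightarrow> real) \<Rightarrow> (nat \<Rightarrow> real) \<Rightarrow> (nat \<Rightarrow> real) \<Rightarrow> real" where
  "IIE a b c = lambdaI a b / sigmaE a c"

definition siems4_a :: "real \<Rightarrow> nat \<Rightarrow> real" where
  "siems4_a g j = [g^3 + 3*g^2/2 - g/2 + 1/12,
                   (-3*g^3 - 3*g^2/2 + 3*g - 5/12),
                   3*g^3 - 3*g^2/2 - 3*g/2 + 13/12,
                   (- (g^3) + 3*g^2/2 - g + 1/4)] ! j"

definition siems4_b :: "real \<Rightarrow> nat \<Rightarrow> real" where
  "siems4_b g j = [g^3, 3*g^2 - 3*g^3, 3*g^3 - 6*g^2 + 3*g, (- (g^3) + 3*g^2 - 3*g + 1), 0] ! j"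

definition siems4_c :: "real \<Rightarrow> nat \<Rightarrow> real" where
  "siems4_c g j = [g^3 + 3*g^2, (-3*g^3 - 6*g^2 + 3*g), 3*g^3 + 3*g^2 - 3*g + 1, - (g^3)] ! j"

end

theory Submission
  imports Defs
begin

text \<open>
  With \<open>x = cos \<theta>\<close>, a symbol with four coefficients is \<open>\<Sum> v\<^sub>j T\<^sub>j(x) + i sin \<theta> \<Sum> v\<^sub>j U\<^sub>j\<^sub>-\<^sub>1(x)\<close>
  (Chebyshev polynomials), so \<open>|a|\<^sup>2\<close>, \<open>|c|\<^sup>2\<close> and \<open>Re (b * cnj a)\<close> are polynomials in \<open>x\<close> and \<open>\<gamma>\<close>, and
  \<open>b\<close> may be treated as a symbol with four coefficients since \<open>b\<^sub>4 = 0\<close>.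
  The three bounds \<open>|a| \<ge> 1\<close>, \<open>|c/a| \<le> \<sigma>\<^sub>E\<close> and \<open>Re (b/a) \<ge> \<lambda>\<^sub>I\<close> thus become polynomial
  inequalities; each is certified by an identity writing the difference as \<open>1 - x\<close> or \<open>1 + x\<close>
  times a polynomial with nonnegative coefficients in \<open>\<gamma> - 6/5\<close>, \<open>1 - x\<close> and \<open>1 + x\<close>.
  The bounds are attained at \<open>\<theta> = 0\<close> for \<open>\<sigma>\<^sub>F\<close> and at \<open>\<theta> = \<pi>\<close> for \<open>\<sigma>\<^sub>E\<close> and \<open>\<lambda>\<^sub>I\<close>.
\<close>

lemma cSUP_eq_attained_maximum:
  fixes f :: "'a \<Rightarrow> 'b::conditionally_complete_lattice"
  assumes "x\<^sub>0 \<in> S" "f x\<^sub>0 = M" "\<And>x. x \<in> S \<Longrightarrow> f x \<le> M"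
  shows "(SUP x\<in>S. f x) = M"
  using assms by (auto intro!: cSup_eq_maximum)

lemma cINF_eq_attained_minimum:
  fixes f :: "'a \<Rightarrow> 'b::conditionally_complete_lattice"
  assumes "x\<^sub>0 \<in> S" "f x\<^sub>0 = m" "\<And>x. x \<in> S \<Longrightarrow> m \<le> f x"
  shows "(INF x\<in>S. f x) = m"
  using assms by (auto intro!: cInf_eq_minimum)

lemma symb_eq_sum_cis_power: "symb v n \<theta> = (\<Sum>j<n. of_real (v j) * cis \<theta> ^ j)"
  unfolding symb_def cis_conv_exp exp_of_nat_mult [symmetric] by (simp add: mult_ac)

lemma symb_Suc_zero_coeff: "v n = 0 \<Longrightarrow> symb v (Suc n) \<theta> = symb v n \<theta>"
  by (simp add: symb_def)

definition cheb_cos :: "(nat \<Rightarrow> real) \<Rightarrow> real \<Rightarrow> real" where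
  "cheb_cos v x = v 0 + v 1 * x + v 2 * (2 * x^2 - 1) + v 3 * (4 * x^3 - 3 * x)"

definition cheb_sin :: "(nat \<Rightarrow> real) \<Rightarrow> real \<Rightarrow> real" where
  "cheb_sin v x = v 1 + v 2 * (2 * x) + v 3 * (4 * x^2 - 1)"

lemma symb4_eq_Complex: "symb v 4 \<theta> = Complex (cheb_cos v (cos \<theta>)) (sin \<theta> * cheb_sin v (cos \<theta>))"
proof -
  have "sin \<theta>^2 = 1 - cos \<theta>^2"
    by (simp add: sin_squared_eq)
  then show ?thesis
    unfolding symb_eq_sum_cis_power cheb_cos_def cheb_sin_def
    by (simp add: eval_nat_numeral complex_eq_iff cis.ctr) algebra+
qed

definition symb4_inner :: "(nat \<Rightarrow> real) \<Rightarrow> (nat \<Rightarrow> real) \<Rightarrow> real \<Rightarrow> real" where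
  "symb4_inner u v x = cheb_cos u x * cheb_cos v x + (1 - x^2) * cheb_sin u x * cheb_sin v x"

lemma Re_Im_symb4_inner:
  "Re (symb u 4 \<theta>) * Re (symb v 4 \<theta>) + Im (symb u 4 \<theta>) * Im (symb v 4 \<theta>) = symb4_inner u v (cos \<theta>)"
proof -
  have "sin \<theta>^2 = 1 - cos \<theta>^2"
    by (simp add: sin_squared_eq)
  then show ?thesis
    unfolding symb4_eq_Complex symb4_inner_def by simp algebra
qed

lemma norm_symb4_sq: "(cmod (symb v 4 \<theta>))^2 = symb4_inner v v (cos \<theta>)"
  unfolding cmod_power2 by (simp only: power2_eq_square Re_Im_symb4_inner)

lemma Re_divide_symb4:
  "Re (symb u 4 \<theta> / symb v 4 \<theta>) = symb4_inner u v (cos \<theta>) / symb4_inner v v (cos \<theta>)"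
  by (simp add: Re_divide' Re_Im_symb4_inner norm_symb4_sq)

lemma norm_divide_symb4_sq:
  "(cmod (symb u 4 \<theta> / symb v 4 \<theta>))^2 = symb4_inner u u (cos \<theta>) / symb4_inner v v (cos \<theta>)"
  by (simp add: norm_divide power_divide norm_symb4_sq)

lemma symb4_at_0: "symb v 4 0 = of_real (v 0 + v 1 + v 2 + v 3)"
  by (simp add: symb4_eq_Complex cheb_cos_def complex_eq_iff)

lemma symb4_at_pi: "symb v 4 pi = of_real (v 0 - v 1 + v 2 - v 3)"
  by (simp add: symb4_eq_Complex cheb_cos_def complex_eq_iff)

lemma siems4_a_sum: "siems4_a g 0 + siems4_a g 1 + siems4_a g 2 + siems4_a g 3 = 1"
  by (simp add: siems4_a_def)

lemma siems4_a_alternating_sum: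
  "siems4_a g 0 - siems4_a g 1 + siems4_a g 2 - siems4_a g 3 = 4 * (6*g^3 - 3*g + 1) / 3"
  by (simp add: siems4_a_def)

lemma siems4_b_alternating_sum:
  "siems4_b g 0 - siems4_b g 1 + siems4_b g 2 - siems4_b g 3 = (2*g - 1)^3"
  by (simp add: siems4_b_def) algebra

lemma siems4_c_alternating_sum:
  "siems4_c g 0 - siems4_c g 1 + siems4_c g 2 - siems4_c g 3 = 8*g^3 + 12*g^2 - 6*g + 1"
  by (simp add: siems4_c_def)

lemma symb_siems4_b: "symb (siems4_b g) 5 \<theta> = symb (siems4_b g) 4 \<theta>"
  using symb_Suc_zero_coeff [of "siems4_b g" 4] by (simp add: siems4_b_def numeral_eq_Suc)

definition cert_sigmaF :: "real \<Rightarrow> real \<Rightarrow> real \<Rightarrow> real" where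
  "cert_sigmaF t y w = (241/1200)*w^3 + (21/20)*t*w^3 + (3/4)*t^2*w^3 + (5257/90000)*y*w^2
    + (387/125)*t*y*w^2 + (361/50)*t^2*y*w^2 + (37/5)*t^3*y*w^2 + 3*t^4*y*w^2
    + (14624381/2250000)*y^2*w + (1560413/37500)*t*y^2*w + (51063/500)*t^2*y^2*w
    + (9583/75)*t^3*y^2*w + (427/5)*t^4*y^2*w + (144/5)*t^5*y^2*w + 4*t^6*y^2*w
    + (14944831/2250000)*y^3 + (370922/9375)*t*y^3 + (11957/125)*t^2*y^3 + (9028/75)*t^3*y^3
    + (412/5)*t^4*y^3 + (144/5)*t^5*y^3 + 4*t^6*y^3"

definition cert_sigmaE :: "real \<Rightarrow> real \<Rightarrow> real \<Rightarrow> real" where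
  "cert_sigmaE t y w = (3616066157/625000)*y^2 + (5083385574/78125)*t*y^2
    + (4774256787/15625)*t^2*y^2 + (2512882842/3125)*t^3*y^2 + (825897774/625)*t^4*y^2
    + 1413744*t^5*y^2 + (24662144/25)*t^6*y^2 + (2162592/5)*t^7*y^2 + 107712*t^8*y^2
    + 11520*t^9*y^2 + (1133013303/312500)*w*y + (796163943/31250)*t*w*y
    + (475225689/6250)*t^2*w*y + (15556404/125)*t^3*w*y + (3002814/25)*t^4*w*y
    + (1699272/25)*t^5*w*y + (103584/5)*t^6*w*y + 2592*t^7*w*y + (14426293/25000)*w^2
    + (125097/50)*t*w^2 + (213291/50)*t^2*w^2 + (17736/5)*t^3*w^2 + 1422*t^4*w^2 + 216*t^5*w^2"

definition cert_lambdaI :: "real \<Rightarrow> real \<Rightarrow> real \<Rightarrow> real" where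
  "cert_lambdaI t y w = (952469/75000)*y^2 + (404087/2500)*t*y^2 + (3512/5)*t^2*y^2
    + (22339/15)*t^3*y^2 + 1692*t^4*y^2 + 996*t^5*y^2 + 240*t^6*y^2 + (113623/7500)*w*y
    + (10516/125)*t*w*y + (8673/50)*t^2*w*y + (791/5)*t^3*w*y + 54*t^4*w*y + (571/200)*w^2
    + (141/20)*t*w^2 + (9/2)*t^2*w^2"

lemma cert_nonneg:
  fixes t y w :: real
  assumes "0 \<le> t" "0 \<le> y" "0 \<le> w"
  shows "0 \<le> cert_sigmaF t y w" "0 \<le> cert_sigmaE t y w" "0 \<le> cert_lambdaI t y w"
  unfolding cert_sigmaF_def cert_sigmaE_def cert_lambdaI_def using assms
  by (intro add_nonneg_nonneg mult_nonneg_nonneg zero_le_power; simp)+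

lemma siems4_sigmaF_identity:
  "symb4_inner (siems4_a g) (siems4_a g) x - 1 = (1 - x) * cert_sigmaF (g - 6/5) (1 - x) (1 + x)"
  unfolding symb4_inner_def cheb_cos_def cheb_sin_def cert_sigmaF_def
  by (simp add: siems4_a_def) algebra

lemma siems4_sigmaE_identity:
  "(3 * (8*g^3 + 12*g^2 - 6*g + 1))^2 * symb4_inner (siems4_a g) (siems4_a g) x
     - (4 * (6*g^3 - 3*g + 1))^2 * symb4_inner (siems4_c g) (siems4_c g) x
   = (1 + x) * cert_sigmaE (g - 6/5) (1 - x) (1 + x)"
  unfolding symb4_inner_def cheb_cos_def cheb_sin_def cert_sigmaE_def
  by (simp add: siems4_a_def siems4_c_def) algebra

lemma siems4_lambdaI_identity:
  "4 * (6*g^3 - 3*g + 1) * symb4_inner (siems4_b g) (siems4_a g) x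
     - 3 * (2*g - 1)^3 * symb4_inner (siems4_a g) (siems4_a g) x
   = (1 + x) * cert_lambdaI (g - 6/5) (1 - x) (1 + x)"
  unfolding symb4_inner_def cheb_cos_def cheb_sin_def cert_lambdaI_def
  by (simp add: siems4_a_def siems4_b_def) algebra

lemma siems4_denominators_pos:
  fixes g :: real
  assumes "1 \<le> g"
  shows "0 < 6*g^3 - 3*g + 1" "0 < 8*g^3 + 12*g^2 - 6*g + 1"
proof -
  have "1 * g \<le> g^2 * g"
    using assms by (intro mult_right_mono) (simp_all add: one_le_power)
  then have "g \<le> g^3"
    by (simp add: power2_eq_square power3_eq_cube)
  then show "0 < 6*g^3 - 3*g + 1" "0 < 8*g^3 + 12*g^2 - 6*g + 1"
    using assms zero_le_power2 [of g] by linarith+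
qed

lemma siems4_cert_args_nonneg:
  fixes g \<theta> :: real
  assumes "6/5 \<le> g"
  shows "0 \<le> g - 6/5" "0 \<le> 1 - cos \<theta>" "0 \<le> 1 + cos \<theta>"
  using assms cos_ge_minus_one [of \<theta>] cos_le_one [of \<theta>] by linarith+

lemma siems4_inner_a_ge_1:
  assumes "6/5 \<le> g"
  shows "1 \<le> symb4_inner (siems4_a g) (siems4_a g) (cos \<theta>)"
proof -
  have "0 \<le> (1 - cos \<theta>) * cert_sigmaF (g - 6/5) (1 - cos \<theta>) (1 + cos \<theta>)"
    using siems4_cert_args_nonneg [OF assms] cert_nonneg by simp
  then show ?thesis
    using siems4_sigmaF_identity [of g "cos \<theta>"] by linarith
qed

lemma siems4_norm_a_ge_1:
  assumes "6/5 \<le> g"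
  shows "1 \<le> cmod (symb (siems4_a g) 4 \<theta>)"
proof (rule power2_le_imp_le)
  show "1\<^sup>2 \<le> (cmod (symb (siems4_a g) 4 \<theta>))\<^sup>2"
    using siems4_inner_a_ge_1 [OF assms] by (simp add: norm_symb4_sq)
qed simp

lemma siems4_norm_c_div_a_le:
  assumes "6/5 \<le> g"
  shows "cmod (symb (siems4_c g) 4 \<theta> / symb (siems4_a g) 4 \<theta>)
    \<le> 3 * (8*g^3 + 12*g^2 - 6*g + 1) / (4 * (6*g^3 - 3*g + 1))"
proof -
  define D N where "D = 4 * (6*g^3 - 3*g + 1)" and "N = 8*g^3 + 12*g^2 - 6*g + 1"
  define a c where "a = symb4_inner (siems4_a g) (siems4_a g) (cos \<theta>)"
    and "c = symb4_inner (siems4_c g) (siems4_c g) (cos \<theta>)"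
  have "0 < D" "0 < N"
    using siems4_denominators_pos [of g] assms unfolding D_def N_def by simp_all
  have "0 < a"
    using siems4_inner_a_ge_1 [OF assms] unfolding a_def by (rule less_le_trans [OF zero_less_one])
  have "(3 * N)^2 * a - D^2 * c = (1 + cos \<theta>) * cert_sigmaE (g - 6/5) (1 - cos \<theta>) (1 + cos \<theta>)"
    unfolding D_def N_def a_def c_def by (rule siems4_sigmaE_identity)
  moreover have "0 \<le> (1 + cos \<theta>) * cert_sigmaE (g - 6/5) (1 - cos \<theta>) (1 + cos \<theta>)"
    using siems4_cert_args_nonneg [OF assms] cert_nonneg by simp
  ultimately have "D^2 * c \<le> (3 * N)^2 * a"
    by linarith
  then have "c \<le> (3 * N)^2 * a / D^2"
    using \<open>0 < D\<close> by (intro mult_imp_le_div_pos) (simp_all add: mult.commute)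
  then have "c / a \<le> (3 * N)^2 * a / D^2 / a"
    using \<open>0 < a\<close> by (intro divide_right_mono) simp_all
  also have "\<dots> = (3 * N / D)^2"
    using \<open>0 < a\<close> by (simp add: power_divide)
  finally have "c / a \<le> (3 * N / D)^2" .
  then have "(cmod (symb (siems4_c g) 4 \<theta> / symb (siems4_a g) 4 \<theta>))^2 \<le> (3 * N / D)^2"
    unfolding norm_divide_symb4_sq a_def c_def .
  then have "cmod (symb (siems4_c g) 4 \<theta> / symb (siems4_a g) 4 \<theta>) \<le> 3 * N / D"
    by (rule power2_le_imp_le) (use \<open>0 < D\<close> \<open>0 < N\<close> in simp)
  then show ?thesis
    unfolding D_def N_def .
qed

lemma siems4_Re_b_div_a_ge:
  assumes "6/5 \<le> g"
  shows "3 * (2*g - 1)^3 / (4 * (6*g^3 - 3*g + 1))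
    \<le> Re (symb (siems4_b g) 5 \<theta> / symb (siems4_a g) 4 \<theta>)"
proof -
  define D where "D = 4 * (6*g^3 - 3*g + 1)"
  define a b where "a = symb4_inner (siems4_a g) (siems4_a g) (cos \<theta>)"
    and "b = symb4_inner (siems4_b g) (siems4_a g) (cos \<theta>)"
  have "0 < D"
    using siems4_denominators_pos [of g] assms unfolding D_def by simp
  have "0 < a"
    using siems4_inner_a_ge_1 [OF assms] unfolding a_def by (rule less_le_trans [OF zero_less_one])
  have "D * b - 3 * (2*g - 1)^3 * a = (1 + cos \<theta>) * cert_lambdaI (g - 6/5) (1 - cos \<theta>) (1 + cos \<theta>)"
    unfolding D_def a_def b_def by (rule siems4_lambdaI_identity)
  moreover have "0 \<le> (1 + cos \<theta>) * cert_lambdaI (g - 6/5) (1 - cos \<theta>) (1 + cos \<theta>)"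
    using siems4_cert_args_nonneg [OF assms] cert_nonneg by simp
  ultimately have "3 * (2*g - 1)^3 * a \<le> D * b"
    by linarith
  then have "3 * (2*g - 1)^3 * a / D \<le> b"
    using \<open>0 < D\<close> by (intro mult_imp_div_pos_le) (simp_all add: mult.commute)
  then have "3 * (2*g - 1)^3 / D \<le> b / a"
    using \<open>0 < a\<close> by (intro mult_imp_le_div_pos) simp_all
  then show ?thesis
    unfolding D_def symb_siems4_b Re_divide_symb4 a_def b_def .
qed

lemma sigmaF_siems4:
  assumes "6/5 \<le> g"
  shows "sigmaF (siems4_a g) = 1"
  unfolding sigmaF_def
proof (rule cSUP_eq_attained_maximum)
  show "0 \<in> {0..<2*pi}"
    by simp
  show "cmod (1 / symb (siems4_a g) 4 0) = 1"
    unfolding symb4_at_0 siems4_a_sum by simp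
  show "cmod (1 / symb (siems4_a g) 4 \<theta>) \<le> 1" for \<theta>
    using siems4_norm_a_ge_1 [OF assms, of \<theta>] by (simp add: norm_divide divide_le_eq)
qed

lemma sigmaE_siems4:
  assumes "6/5 \<le> g"
  shows "sigmaE (siems4_a g) (siems4_c g)
    = 3 * (8*g^3 + 12*g^2 - 6*g + 1) / (4 * (6*g^3 - 3*g + 1))"
  unfolding sigmaE_def
proof (rule cSUP_eq_attained_maximum)
  show "pi \<in> {0..<2*pi}"
    by simp
  show "cmod (symb (siems4_c g) 4 pi / symb (siems4_a g) 4 pi)
    = 3 * (8*g^3 + 12*g^2 - 6*g + 1) / (4 * (6*g^3 - 3*g + 1))"
    using siems4_denominators_pos [of g] assms
    unfolding symb4_at_pi siems4_a_alternating_sum siems4_c_alternating_sum norm_divide norm_of_real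
    by simp
  show "cmod (symb (siems4_c g) 4 \<theta> / symb (siems4_a g) 4 \<theta>)
    \<le> 3 * (8*g^3 + 12*g^2 - 6*g + 1) / (4 * (6*g^3 - 3*g + 1))" for \<theta>
    using assms by (rule siems4_norm_c_div_a_le)
qed

lemma lambdaI_siems4:
  assumes "6/5 \<le> g"
  shows "lambdaI (siems4_a g) (siems4_b g) = 3 * (2*g - 1)^3 / (4 * (6*g^3 - 3*g + 1))"
  unfolding lambdaI_def
proof (rule cINF_eq_attained_minimum)
  show "pi \<in> {0..<2*pi}"
    by simp
  show "Re (symb (siems4_b g) 5 pi / symb (siems4_a g) 4 pi)
    = 3 * (2*g - 1)^3 / (4 * (6*g^3 - 3*g + 1))"
    unfolding symb_siems4_b symb4_at_pi siems4_a_alternating_sum siems4_b_alternating_sum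
    by simp
  show "3 * (2*g - 1)^3 / (4 * (6*g^3 - 3*g + 1))
    \<le> Re (symb (siems4_b g) 5 \<theta> / symb (siems4_a g) 4 \<theta>)" for \<theta>
    using assms by (rule siems4_Re_b_div_a_ge)
qed

theorem mainTheorem11:
  fixes \<gamma> :: real
  assumes "\<gamma> \<ge> 6/5"
  shows "sigmaF (siems4_a \<gamma>) = 1
    \<and> sigmaE (siems4_a \<gamma>) (siems4_c \<gamma>)
        = 3 * (8*\<gamma>^3 + 12*\<gamma>^2 - 6*\<gamma> + 1) / (4 * (6*\<gamma>^3 - 3*\<gamma> + 1))
    \<and> lambdaI (siems4_a \<gamma>) (siems4_b \<gamma>)
        = 3 * (2*\<gamma> - 1)^3 / (4 * (6*\<gamma>^3 - 3*\<gamma> + 1))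
    \<and> IIE (siems4_a \<gamma>) (siems4_b \<gamma>) (siems4_c \<gamma>)
        = (2*\<gamma> - 1)^3 / (8*\<gamma>^3 + 12*\<gamma>^2 - 6*\<gamma> + 1)"
proof -
  define D N where "D = 4 * (6*\<gamma>^3 - 3*\<gamma> + 1)" and "N = 8*\<gamma>^3 + 12*\<gamma>^2 - 6*\<gamma> + 1"
  have "0 < D"
    using siems4_denominators_pos [of \<gamma>] assms unfolding D_def by simp
  have sigmaE: "sigmaE (siems4_a \<gamma>) (siems4_c \<gamma>) = 3 * N / D"
    using sigmaE_siems4 [OF assms] unfolding D_def N_def .
  have lambdaI: "lambdaI (siems4_a \<gamma>) (siems4_b \<gamma>) = 3 * (2*\<gamma> - 1)^3 / D"
    using lambdaI_siems4 [OF assms] unfolding D_def .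
  have "IIE (siems4_a \<gamma>) (siems4_b \<gamma>) (siems4_c \<gamma>) = (2*\<gamma> - 1)^3 / N"
    unfolding IIE_def sigmaE lambdaI using \<open>0 < D\<close> by simp
  then show ?thesis
    using sigmaF_siems4 [OF assms] sigmaE lambdaI unfolding D_def N_def by simp
qed

end
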